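(* Let $U=(U_{ij})_{i,j=1}^M$, $U_{ij}\in M_M(\mathbb C)$, and $V=(V_{ab})_{a,b=1}^N$, $V_{ab}\in M_N(\mathbb C)$, be projective models, such that $U$ and $V'$ are positive. Let $Q\in M_{M\times N}(\mathbb T)$ and $W=U\otimes_QV$. Then for all integers $p,r\geq1$, $$|c_p^r(W)|\leq c_p^r(U)\,c_p^r(V).$$
   Context: A square matrix $(P_{ij})$ with entries in a $C^*$-algebra is magic if all $P_{ij}$ are orthogonal projections and each row and each column sums to $1$. For $U=(U_{ij})_{i,j=1}^n$ with $U_{ij}\in M_n(\mathbb C)$, define $U'=(U'_{kl})$ by $(U'_{kl})_{ij}=(U_{ij})_{kl}$. $U$ is a projective model if both $U$ and $U'$ are magic. $U$ is positive if $tr(U_{i_1j_1}\cdots U_{i_pj_p})\geq0$ for all $p$ and all indices, where $tr$ is the normalized trace on $M_n(\mathbb C)$. $T_p^U\in M_{n^p}(\mathbb C)$ has entries $(T_p^U)_{i_1\dots i_p,j_1\dots j_p}=tr(U_{i_1j_1}\cdots U_{i_pj_p})$, and $c_p^r(U)=Tr((T_p^U)^r)$ (non-normalized trace). The deformed tensor product $W=U\otimes_QV$ is the $MN\times MN$ matrix with entries in $M_{MN}(\mathbb C)$ given by $(W_{ia,jb})_{kc,ld}=\frac{Q_{ic}Q_{jd}}{Q_{id}Q_{jc}}(U_{ij})_{kl}(V_{ab})_{cd}$, $i,j,k,l\in\{1,\dots,M\}$, $a,b,c,d\in\{1,\dots,N\}$. *)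

theory Defs
  imports Complex_Main
begin

text \<open>Square complex matrices of size n are represented as functions
  nat \<Rightarrow> nat \<Rightarrow> complex, only entries with indices below n matter.
  A matrix U = (U_ij) with U_ij in M_n(C) is a function
  U :: nat \<Rightarrow> nat \<Rightarrow> nat \<Rightarrow> nat \<Rightarrow> complex with U i j k l = (U_ij)_kl.\<close>

type_synonym cmat = "nat \<Rightarrow> nat \<Rightarrow> complex"
type_synonym bmat = "nat \<Rightarrow> nat \<Rightarrow> nat \<Rightarrow> nat \<Rightarrow> complex"

definition mmult :: "nat \<Rightarrow> cmat \<Rightarrow> cmat \<Rightarrow> cmat" where
  "mmult n A B = (\<lambda>k l. \<Sum>m<n. A k m * B m l)"

definition mid :: cmat where
  "mid = (\<lambda>k l. if k = l then 1 else 0)"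

definition mat_eq :: "nat \<Rightarrow> cmat \<Rightarrow> cmat \<Rightarrow> bool" where
  "mat_eq n A B \<longleftrightarrow> (\<forall>k<n. \<forall>l<n. A k l = B k l)"

definition is_orth_proj :: "nat \<Rightarrow> cmat \<Rightarrow> bool" where
  "is_orth_proj n P \<longleftrightarrow> mat_eq n (mmult n P P) P \<and> (\<forall>k<n. \<forall>l<n. cnj (P l k) = P k l)"

definition magic :: "nat \<Rightarrow> nat \<Rightarrow> bmat \<Rightarrow> bool" where
  "magic n m U \<longleftrightarrow>
     (\<forall>i<n. \<forall>j<n. is_orth_proj m (U i j)) \<and>
     (\<forall>i<n. mat_eq m (\<lambda>k l. \<Sum>j<n. U i j k l) mid) \<and>
     (\<forall>j<n. mat_eq m (\<lambda>k l. \<Sum>i<n. U i j k l) mid)"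

definition prime_model :: "bmat \<Rightarrow> bmat" where
  "prime_model U = (\<lambda>k l i j. U i j k l)"

definition projective_model :: "nat \<Rightarrow> bmat \<Rightarrow> bool" where
  "projective_model n U \<longleftrightarrow> magic n n U \<and> magic n n (prime_model U)"

definition mprod_list :: "nat \<Rightarrow> cmat list \<Rightarrow> cmat" where
  "mprod_list n As = foldr (mmult n) As mid"

definition ntr :: "nat \<Rightarrow> cmat \<Rightarrow> complex" where
  "ntr n A = (\<Sum>k<n. A k k) / of_nat n"

definition trword :: "nat \<Rightarrow> bmat \<Rightarrow> nat list \<Rightarrow> nat list \<Rightarrow> complex" where
  "trword n U is js = ntr n (mprod_list n (map (\<lambda>(i, j). U i j) (zip is js)))"

definition idx :: "nat \<Rightarrow> nat \<Rightarrow> nat list set" where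
  "idx n p = {xs. length xs = p \<and> set xs \<subseteq> {..<n}}"

definition positive_model :: "nat \<Rightarrow> bmat \<Rightarrow> bool" where
  "positive_model n U \<longleftrightarrow>
     (\<forall>p. \<forall>is\<in>idx n p. \<forall>js\<in>idx n p. trword n U is js \<in> \<real> \<and> 0 \<le> Re (trword n U is js))"

definition Tp :: "nat \<Rightarrow> bmat \<Rightarrow> nat \<Rightarrow> nat list \<Rightarrow> nat list \<Rightarrow> complex" where
  "Tp n U p = trword n U"

fun set_mpow :: "'a set \<Rightarrow> ('a \<Rightarrow> 'a \<Rightarrow> complex) \<Rightarrow> nat \<Rightarrow> ('a \<Rightarrow> 'a \<Rightarrow> complex)" where
  "set_mpow S T 0 = (\<lambda>x y. if x = y then 1 else 0)"
| "set_mpow S T (Suc r) = (\<lambda>x y. \<Sum>z\<in>S. set_mpow S T r x z * T z y)"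

text \<open>c_p^r(U) = Tr((T_p^U)^r), non-normalized trace.\<close>
definition cpr :: "nat \<Rightarrow> bmat \<Rightarrow> nat \<Rightarrow> nat \<Rightarrow> complex" where
  "cpr n U p r = (\<Sum>I\<in>idx n p. set_mpow (idx n p) (Tp n U p) r I I)"

text \<open>Deformed tensor product; the index (i,a), i<M, a<N is encoded as i*N+a.\<close>
definition deformed_tensor :: "nat \<Rightarrow> nat \<Rightarrow> (nat \<Rightarrow> nat \<Rightarrow> complex) \<Rightarrow> bmat \<Rightarrow> bmat \<Rightarrow> bmat" where
  "deformed_tensor M N Q U V = (\<lambda>x y z w.
     let i = x div N; a = x mod N; j = y div N; b = y mod N;
         k = z div N; c = z mod N; l = w div N; d = w mod N
     in Q i c * Q j d / (Q i d * Q j c) * U i j k l * V a b c d)"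

end

theory Submission
  imports Defs "HOL-Library.FuncSet" "HOL-Library.Complex_Order"
begin

text \<open>Expanding matrix powers and traces of products into sums over index paths, the trace
  c_p^r(W) becomes a sum over r-tuples of index words of W. Splitting each index of W into
  a U-index and a V-index, every such term factors into a product of traces of words in U,
  which are nonnegative, times a sum in which the entries of V appear transposed: after
  exchanging the roles of the two index directions it becomes a sum of products of traces of
  words in V', again nonnegative, weighted by unimodular phases coming from Q. The triangle
  inequality removes the phases, and what remains is exactly c_p^r(U) c_p^r(V).\<close>

section \<open>Cycle sums for traces of matrix products\<close>

fun seq_mprod :: "'a set \<Rightarrow> (nat \<Rightarrow> 'a \<Rightarrow> 'a \<Rightarrow> complex) \<Rightarrow> nat \<Rightarrow> 'a \<Rightarrow> 'a \<Rightarrow> complex" where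
  "seq_mprod S A 0 = (\<lambda>x y. if x = y then 1 else 0)"
| "seq_mprod S A (Suc r) = (\<lambda>x y. \<Sum>z\<in>S. seq_mprod S A r x z * A r z y)"

lemma sum_PiE_lessThan_Suc:
  fixes F :: "(nat \<Rightarrow> 'a) \<Rightarrow> complex"
  assumes "finite S"
  shows "(\<Sum>g\<in>{..<Suc n} \<rightarrow>\<^sub>E S. F g) = (\<Sum>f\<in>{..<n} \<rightarrow>\<^sub>E S. \<Sum>w\<in>S. F (f(n:=w)))"
proof -
  have "(\<Sum>g\<in>{..<Suc n} \<rightarrow>\<^sub>E S. F g) = (\<Sum>(w,f)\<in>S \<times> ({..<n} \<rightarrow>\<^sub>E S). F (f(n:=w)))"
    by (intro sum.reindex_bij_witness[of _ "\<lambda>(y,g). g(n := y)" "\<lambda>g. (g n, g(n := undefined))"])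
       (auto simp: PiE_def extensional_def Pi_def less_Suc_eq)
  also have "\<dots> = (\<Sum>w\<in>S. \<Sum>f\<in>{..<n} \<rightarrow>\<^sub>E S. F (f(n:=w)))"
    by (subst sum.cartesian_product) auto
  also have "\<dots> = (\<Sum>f\<in>{..<n} \<rightarrow>\<^sub>E S. \<Sum>w\<in>S. F (f(n:=w)))"
    by (rule sum.swap)
  finally show ?thesis .
qed

lemma sum_indicator_mult:
  assumes "finite S" "x \<in> S"
  shows "(\<Sum>w\<in>S. (if w = x then 1 else 0) * g w) = (g x :: complex)"
  using assms by (simp add: if_distrib[of "\<lambda>c. c * _"] sum.delta' cong: if_cong)

lemma seq_mprod_eq_path_sum:
  assumes "finite S" "x \<in> S" "y \<in> S"
  shows "seq_mprod S A r x y = (\<Sum>f\<in>{..<Suc r} \<rightarrow>\<^sub>E S. (if f 0 = x then 1 else 0) *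
            (\<Prod>t<r. A t (f t) (f (Suc t))) * (if f r = y then 1 else 0))"
  using assms(3)
proof (induction r arbitrary: y)
  case 0
  let ?F = "\<lambda>f. (if f 0 = x then 1 else 0) *
            (\<Prod>t<0. A t (f t) (f (Suc t))) * (if f 0 = y then 1 else (0::complex))"
  have empty: "{..<0::nat} \<rightarrow>\<^sub>E S = {\<lambda>_. undefined}" by auto
  have "(\<Sum>f\<in>{..<Suc 0} \<rightarrow>\<^sub>E S. ?F f) = (\<Sum>w\<in>S. ?F ((\<lambda>_. undefined)(0:=w)))"
    by (simp add: sum_PiE_lessThan_Suc[OF assms(1)] empty)
  also have "\<dots> = (\<Sum>w\<in>S. (if w = x then 1 else 0) * (if w = y then 1 else 0))" by simp
  also have "\<dots> = (if x = y then 1 else 0)"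
    using assms 0 by (simp add: sum_indicator_mult)
  finally show ?case by simp
next
  case (Suc r)
  let ?P = "\<lambda>f. (if f 0 = x then 1 else 0) * (\<Prod>t<r. A t (f t) (f (Suc t)))"
  let ?f' = "\<lambda>f w. f(Suc r := w)"
  have "seq_mprod S A (Suc r) x y
      = (\<Sum>z\<in>S. (\<Sum>f\<in>{..<Suc r} \<rightarrow>\<^sub>E S. ?P f * (if f r = z then 1 else 0)) * A r z y)"
    using Suc by simp
  also have "\<dots> = (\<Sum>f\<in>{..<Suc r} \<rightarrow>\<^sub>E S. ?P f * (\<Sum>z\<in>S. (if z = f r then 1 else 0) * A r z y))"
    by (simp add: sum_distrib_right sum_distrib_left sum.swap[of _ S] mult.assoc eq_commute)
  also have "\<dots> = (\<Sum>f\<in>{..<Suc r} \<rightarrow>\<^sub>E S. ?P f * A r (f r) y)"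
    using assms(1) by (intro sum.cong refl) (simp add: sum_indicator_mult PiE_iff)
  also have "\<dots> = (\<Sum>f\<in>{..<Suc r} \<rightarrow>\<^sub>E S. \<Sum>w\<in>S. (if ?f' f w 0 = x then 1 else 0) *
            (\<Prod>t<Suc r. A t (?f' f w t) (?f' f w (Suc t))) * (if ?f' f w (Suc r) = y then 1 else 0))"
  proof (rule sum.cong[OF refl])
    fix f
    have last: "(\<Prod>t<Suc r. A t (?f' f w t) (?f' f w (Suc t))) =
             (\<Prod>t<r. A t (f t) (f (Suc t))) * A r (f r) w" for w
      unfolding prod.lessThan_Suc by (auto intro!: prod.cong)
    show "?P f * A r (f r) y = (\<Sum>w\<in>S. (if ?f' f w 0 = x then 1 else 0) *
            (\<Prod>t<Suc r. A t (?f' f w t) (?f' f w (Suc t))) * (if ?f' f w (Suc r) = y then 1 else 0))"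
      unfolding last using Suc.prems assms(1)
      by (simp add: if_distrib[of "\<lambda>z. _ * z"] sum.delta' cong: if_cong)
  qed
  also have "\<dots> = (\<Sum>f\<in>{..<Suc (Suc r)} \<rightarrow>\<^sub>E S. (if f 0 = x then 1 else 0) *
            (\<Prod>t<Suc r. A t (f t) (f (Suc t))) * (if f (Suc r) = y then 1 else 0))"
    by (rule sum_PiE_lessThan_Suc[OF assms(1), symmetric])
  finally show ?case .
qed

lemma trace_seq_mprod_eq_cycle_sum:
  assumes S: "finite S" and r: "0 < r"
  shows "(\<Sum>x\<in>S. seq_mprod S A r x x) = (\<Sum>h\<in>{..<r} \<rightarrow>\<^sub>E S. \<Prod>t<r. A t (h t) (h (Suc t mod r)))"
proof -
  let ?P = "\<lambda>f. (\<Prod>t<r. A t (f t) (f (Suc t)))"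
  have "(\<Sum>x\<in>S. seq_mprod S A r x x) = (\<Sum>x\<in>S. \<Sum>f\<in>{..<Suc r} \<rightarrow>\<^sub>E S.
          (if f 0 = x then 1 else 0) * ?P f * (if f r = x then 1 else 0))"
    using S by (intro sum.cong refl seq_mprod_eq_path_sum) auto
  also have "\<dots> = (\<Sum>f\<in>{..<Suc r} \<rightarrow>\<^sub>E S. \<Sum>x\<in>S. (if x = f 0 then 1 else 0) * (?P f * (if f r = x then 1 else 0)))"
    by (subst sum.swap) (intro sum.cong refl, auto)
  also have "\<dots> = (\<Sum>f\<in>{..<Suc r} \<rightarrow>\<^sub>E S. (if f r = f 0 then ?P f else 0))"
    using S by (intro sum.cong refl) (simp add: sum_indicator_mult PiE_iff)
  also have "\<dots> = (\<Sum>h\<in>{..<r} \<rightarrow>\<^sub>E S. \<Sum>w\<in>S. (if w = h 0 then ?P (h(r:=w)) else 0))"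
    using r by (subst sum_PiE_lessThan_Suc[OF S]) (intro sum.cong refl, auto)
  also have "\<dots> = (\<Sum>h\<in>{..<r} \<rightarrow>\<^sub>E S. ?P (h(r:=h 0)))"
    using S r by (intro sum.cong refl) (auto simp: sum.delta' PiE_iff)
  also have "\<dots> = (\<Sum>h\<in>{..<r} \<rightarrow>\<^sub>E S. \<Prod>t<r. A t (h t) (h (Suc t mod r)))"
  proof (intro sum.cong refl prod.cong)
    fix h t assume "t \<in> {..<r}"
    then show "A t ((h(r:=h 0)) t) ((h(r:=h 0)) (Suc t)) = A t (h t) (h (Suc t mod r))"
      by (cases "Suc t = r") auto
  qed
  finally show ?thesis .
qed

lemma set_mpow_eq_seq_mprod: "set_mpow S T r = seq_mprod S (\<lambda>_. T) r"
  by (induction r) auto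

lemma mprod_list_snoc:
  assumes "k < n" "l < n"
  shows "mprod_list n (As @ [B]) k l = mmult n (mprod_list n As) B k l"
  using assms
proof (induction As arbitrary: k)
  case Nil
  have "mmult n B mid k l = B k l"
    using Nil by (simp add: mmult_def mid_def if_distrib[of "\<lambda>z. _ * z"] sum.delta cong: if_cong)
  moreover have "mmult n mid B k l = B k l"
    using Nil by (simp add: mmult_def mid_def if_distrib[of "\<lambda>z. z * _"] sum.delta' cong: if_cong)
  ultimately show ?case by (simp add: mprod_list_def)
next
  case (Cons A As)
  have "mprod_list n ((A # As) @ [B]) k l = (\<Sum>m<n. A k m * mprod_list n (As @ [B]) m l)"
    by (simp add: mprod_list_def mmult_def)
  also have "\<dots> = (\<Sum>m<n. \<Sum>q<n. A k m * (mprod_list n As m q * B q l))"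
    using Cons by (simp add: mmult_def sum_distrib_left)
  also have "\<dots> = (\<Sum>q<n. \<Sum>m<n. A k m * (mprod_list n As m q * B q l))"
    by (rule sum.swap)
  also have "\<dots> = mmult n (mprod_list n (A # As)) B k l"
    by (simp add: mprod_list_def mmult_def sum_distrib_right mult.assoc)
  finally show ?case .
qed

lemma mprod_list_eq_seq_mprod:
  assumes "k < n" "l < n"
  shows "mprod_list n As k l = seq_mprod {..<n} (\<lambda>t. As ! t) (length As) k l"
  using assms
proof (induction As arbitrary: l rule: rev_induct)
  case Nil
  then show ?case by (simp add: mprod_list_def mid_def)
next
  case (snoc B As)
  have prefix: "seq_mprod {..<n} (\<lambda>t. (As @ [B]) ! t) m = seq_mprod {..<n} (\<lambda>t. As ! t) m"
    if "m \<le> length As" for m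
    using that by (induction m) (auto simp: nth_append)
  have "mprod_list n (As @ [B]) k l = (\<Sum>z<n. mprod_list n As k z * B z l)"
    using snoc by (simp add: mprod_list_snoc mmult_def)
  also have "\<dots> = (\<Sum>z<n. seq_mprod {..<n} (\<lambda>t. As ! t) (length As) k z * B z l)"
    using snoc by (intro sum.cong refl) auto
  also have "\<dots> = seq_mprod {..<n} (\<lambda>t. (As @ [B]) ! t) (length (As @ [B])) k l"
    by (simp add: prefix)
  finally show ?case .
qed

lemma trace_mprod_list:
  assumes "0 < length As"
  shows "(\<Sum>k<n. mprod_list n As k k)
       = (\<Sum>h\<in>{..<length As} \<rightarrow>\<^sub>E {..<n}. \<Prod>t<length As. (As!t) (h t) (h (Suc t mod length As)))"
proof -
  have "(\<Sum>k<n. mprod_list n As k k) = (\<Sum>k<n. seq_mprod {..<n} (\<lambda>t. As ! t) (length As) k k)"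
    by (intro sum.cong refl mprod_list_eq_seq_mprod) auto
  then show ?thesis
    using trace_seq_mprod_eq_cycle_sum[of "{..<n}" "length As"] assms by simp
qed

lemma Tp_eq_cycle_sum:
  assumes "length is = p" "length js = p" "0 < p"
  shows "Tp n U p is js
       = (\<Sum>h\<in>{..<p} \<rightarrow>\<^sub>E {..<n}. \<Prod>s<p. U (is!s) (js!s) (h s) (h (Suc s mod p))) / of_nat n"
proof -
  let ?As = "map (\<lambda>(i, j). U i j) (zip is js)"
  have "length ?As = p" using assms by simp
  then have "Tp n U p is js
      = (\<Sum>h\<in>{..<p} \<rightarrow>\<^sub>E {..<n}. \<Prod>s<p. (?As!s) (h s) (h (Suc s mod p))) / of_nat n"
    using assms trace_mprod_list[of ?As n] by (simp add: Tp_def trword_def ntr_def)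
  also have "\<dots> = (\<Sum>h\<in>{..<p} \<rightarrow>\<^sub>E {..<n}. \<Prod>s<p. U (is!s) (js!s) (h s) (h (Suc s mod p))) / of_nat n"
    using assms by (intro arg_cong[where f="\<lambda>x. x / _"] sum.cong prod.cong refl) simp
  finally show ?thesis .
qed

lemma finite_idx: "finite (idx n p)"
proof -
  have "idx n p = {xs. set xs \<subseteq> {..<n} \<and> length xs = p}" by (auto simp: idx_def)
  then show ?thesis using finite_lists_length_eq[of "{..<n}" p] by simp
qed

lemma nth_idx_less: "xs \<in> idx n p \<Longrightarrow> s < p \<Longrightarrow> xs ! s < n"
  by (auto simp: idx_def dest!: nth_mem)

lemma cpr_eq_cycle_sum:
  assumes "0 < r"
  shows "cpr n U p r = (\<Sum>F\<in>{..<r} \<rightarrow>\<^sub>E idx n p. \<Prod>t<r. Tp n U p (F t) (F (Suc t mod r)))"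
  unfolding cpr_def set_mpow_eq_seq_mprod
  using trace_seq_mprod_eq_cycle_sum[OF finite_idx assms] by simp

section \<open>Reindexing sums over index words\<close>

lemma bij_betw_transpose_idx:
  "bij_betw (\<lambda>A. \<lambda>s\<in>{..<p}. \<lambda>t\<in>{..<r}. A t ! s)
     ({..<r} \<rightarrow>\<^sub>E idx N p) ({..<p} \<rightarrow>\<^sub>E ({..<r} \<rightarrow>\<^sub>E {..<N}))"
proof (rule bij_betw_byWitness[where f'="\<lambda>\<beta>. \<lambda>t\<in>{..<r}. map (\<lambda>s. \<beta> s t) [0..<p]"])
  show "\<forall>A\<in>{..<r} \<rightarrow>\<^sub>E idx N p. (\<lambda>t\<in>{..<r}. map (\<lambda>s. (\<lambda>s\<in>{..<p}. \<lambda>t\<in>{..<r}. A t ! s) s t) [0..<p]) = A"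
    by (auto simp: PiE_iff idx_def extensional_def fun_eq_iff intro!: nth_equalityI)
  show "\<forall>\<beta>\<in>{..<p} \<rightarrow>\<^sub>E ({..<r} \<rightarrow>\<^sub>E {..<N}). (\<lambda>s\<in>{..<p}. \<lambda>t\<in>{..<r}. (\<lambda>t\<in>{..<r}. map (\<lambda>s. \<beta> s t) [0..<p]) t ! s) = \<beta>"
    by (auto simp: PiE_iff extensional_def fun_eq_iff)
  show "(\<lambda>A. \<lambda>s\<in>{..<p}. \<lambda>t\<in>{..<r}. A t ! s) ` ({..<r} \<rightarrow>\<^sub>E idx N p) \<subseteq> {..<p} \<rightarrow>\<^sub>E ({..<r} \<rightarrow>\<^sub>E {..<N})"
    by (fastforce simp: idx_def PiE_iff dest: nth_mem)
  show "(\<lambda>\<beta>. \<lambda>t\<in>{..<r}. map (\<lambda>s. \<beta> s t) [0..<p]) ` ({..<p} \<rightarrow>\<^sub>E ({..<r} \<rightarrow>\<^sub>E {..<N})) \<subseteq> {..<r} \<rightarrow>\<^sub>E idx N p"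
    by (auto simp: idx_def PiE_iff)
qed

lemma sum_PiE_idx_transpose:
  fixes H :: "nat \<Rightarrow> nat \<Rightarrow> nat \<Rightarrow> nat \<Rightarrow> complex"
  assumes r: "0 < r"
  shows "(\<Sum>A\<in>{..<r} \<rightarrow>\<^sub>E idx N p. \<Prod>t<r. \<Prod>s<p. H t s (A t ! s) (A (Suc t mod r) ! s))
       = (\<Prod>s<p. \<Sum>\<alpha>\<in>{..<r} \<rightarrow>\<^sub>E {..<N}. \<Prod>t<r. H t s (\<alpha> t) (\<alpha> (Suc t mod r)))"
proof -
  let ?T = "\<lambda>A. \<lambda>s\<in>{..<p}. \<lambda>t\<in>{..<r}. A t ! s"
  have "(\<Sum>A\<in>{..<r} \<rightarrow>\<^sub>E idx N p. \<Prod>t<r. \<Prod>s<p. H t s (A t ! s) (A (Suc t mod r) ! s))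
      = (\<Sum>A\<in>{..<r} \<rightarrow>\<^sub>E idx N p. \<Prod>s<p. \<Prod>t<r. H t s (?T A s t) (?T A s (Suc t mod r)))"
    using r by (subst prod.swap) simp
  also have "\<dots> = (\<Sum>\<beta>\<in>{..<p} \<rightarrow>\<^sub>E ({..<r} \<rightarrow>\<^sub>E {..<N}). \<Prod>s<p. \<Prod>t<r. H t s (\<beta> s t) (\<beta> s (Suc t mod r)))"
    by (rule sum.reindex_bij_betw[OF bij_betw_transpose_idx, where g="\<lambda>\<beta>. \<Prod>s<p. \<Prod>t<r. H t s (\<beta> s t) (\<beta> s (Suc t mod r))"])
  also have "\<dots> = (\<Prod>s<p. \<Sum>\<alpha>\<in>{..<r} \<rightarrow>\<^sub>E {..<N}. \<Prod>t<r. H t s (\<alpha> t) (\<alpha> (Suc t mod r)))"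
    by (rule prod_sum_PiE[symmetric]) (auto intro: finite_PiE)
  finally show ?thesis .
qed

lemma pair_code_less: "i < M \<Longrightarrow> a < N \<Longrightarrow> i * N + a < M * (N::nat)"
proof -
  assume "i < M" "a < N"
  then have "i * N + a < Suc i * N" by simp
  also have "\<dots> \<le> M * N" using \<open>i < M\<close> by (intro mult_le_mono1) simp
  finally show ?thesis .
qed

definition encode_pairs :: "nat \<Rightarrow> nat list \<Rightarrow> nat list \<Rightarrow> nat list" where
  "encode_pairs N xs ys = map (\<lambda>(i, a). i * N + a) (zip xs ys)"

lemma length_encode_pairs[simp]: "length (encode_pairs N xs ys) = min (length xs) (length ys)"
  by (simp add: encode_pairs_def)

lemma nth_encode_pairs[simp]: "k < length xs \<Longrightarrow> k < length ys \<Longrightarrow> encode_pairs N xs ys ! k = xs ! k * N + ys ! k"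
  by (simp add: encode_pairs_def)

lemma bij_betw_pair_code_PiE:
  fixes N :: nat
  assumes "0 < N"
  shows "bij_betw (\<lambda>(\<kappa>1, \<kappa>2). \<lambda>s\<in>D. \<kappa>1 s * N + \<kappa>2 s)
           ((D \<rightarrow>\<^sub>E {..<M}) \<times> (D \<rightarrow>\<^sub>E {..<N})) (D \<rightarrow>\<^sub>E {..<M*N})"
proof (rule bij_betw_byWitness[where f'="\<lambda>\<kappa>. (\<lambda>s\<in>D. \<kappa> s div N, \<lambda>s\<in>D. \<kappa> s mod N)"])
  show "\<forall>a\<in>(D \<rightarrow>\<^sub>E {..<M}) \<times> (D \<rightarrow>\<^sub>E {..<N}).
          (\<lambda>\<kappa>. (\<lambda>s\<in>D. \<kappa> s div N, \<lambda>s\<in>D. \<kappa> s mod N)) ((\<lambda>(\<kappa>1, \<kappa>2). \<lambda>s\<in>D. \<kappa>1 s * N + \<kappa>2 s) a) = a"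
    using assms by (auto simp: PiE_iff extensional_def fun_eq_iff)
  show "\<forall>\<kappa>\<in>D \<rightarrow>\<^sub>E {..<M*N}.
          (\<lambda>(\<kappa>1, \<kappa>2). \<lambda>s\<in>D. \<kappa>1 s * N + \<kappa>2 s) ((\<lambda>\<kappa>. (\<lambda>s\<in>D. \<kappa> s div N, \<lambda>s\<in>D. \<kappa> s mod N)) \<kappa>) = \<kappa>"
    by (auto simp: PiE_iff extensional_def fun_eq_iff)
  show "(\<lambda>(\<kappa>1, \<kappa>2). \<lambda>s\<in>D. \<kappa>1 s * N + \<kappa>2 s) ` ((D \<rightarrow>\<^sub>E {..<M}) \<times> (D \<rightarrow>\<^sub>E {..<N})) \<subseteq> D \<rightarrow>\<^sub>E {..<M*N}"
    by (auto simp: PiE_iff intro!: pair_code_less)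
  show "(\<lambda>\<kappa>. (\<lambda>s\<in>D. \<kappa> s div N, \<lambda>s\<in>D. \<kappa> s mod N)) ` (D \<rightarrow>\<^sub>E {..<M*N}) \<subseteq> (D \<rightarrow>\<^sub>E {..<M}) \<times> (D \<rightarrow>\<^sub>E {..<N})"
    using assms by (auto simp: PiE_iff less_mult_imp_div_less)
qed

lemma sum_PiE_lessThan_mult:
  fixes g :: "(nat \<Rightarrow> nat) \<Rightarrow> complex"
  assumes "0 < N"
  shows "(\<Sum>\<kappa>\<in>D \<rightarrow>\<^sub>E {..<M*N}. g \<kappa>) =
         (\<Sum>\<kappa>1\<in>D \<rightarrow>\<^sub>E {..<M}. \<Sum>\<kappa>2\<in>D \<rightarrow>\<^sub>E {..<N}. g (\<lambda>s\<in>D. \<kappa>1 s * N + \<kappa>2 s))"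
  using sum.reindex_bij_betw[OF bij_betw_pair_code_PiE[OF assms], of g]
  by (simp add: sum.cartesian_product case_prod_unfold)

lemma bij_betw_encode_pairs_PiE:
  assumes "0 < N"
  shows "bij_betw (\<lambda>(I, A). \<lambda>t\<in>D. encode_pairs N (I t) (A t))
           ((D \<rightarrow>\<^sub>E idx M p) \<times> (D \<rightarrow>\<^sub>E idx N p)) (D \<rightarrow>\<^sub>E idx (M*N) p)"
proof (rule bij_betw_byWitness[where f'="\<lambda>X. (\<lambda>t\<in>D. map (\<lambda>x. x div N) (X t), \<lambda>t\<in>D. map (\<lambda>x. x mod N) (X t))"])
  have decode: "map (\<lambda>x. x div N) (encode_pairs N xs ys) = xs" "map (\<lambda>x. x mod N) (encode_pairs N xs ys) = ys"
    if "xs \<in> idx M p" "ys \<in> idx N p" for xs ys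
    using assms that nth_idx_less[OF that(2)] by (auto simp: idx_def intro!: nth_equalityI)
  show "\<forall>a\<in>(D \<rightarrow>\<^sub>E idx M p) \<times> (D \<rightarrow>\<^sub>E idx N p).
          (\<lambda>X. (\<lambda>t\<in>D. map (\<lambda>x. x div N) (X t), \<lambda>t\<in>D. map (\<lambda>x. x mod N) (X t)))
            ((\<lambda>(I, A). \<lambda>t\<in>D. encode_pairs N (I t) (A t)) a) = a"
    by (auto simp: PiE_iff extensional_def fun_eq_iff decode)
  have "encode_pairs N (map (\<lambda>x. x div N) xs) (map (\<lambda>x. x mod N) xs) = xs" for xs
    by (intro nth_equalityI) auto
  then show "\<forall>X\<in>D \<rightarrow>\<^sub>E idx (M*N) p.
          (\<lambda>(I, A). \<lambda>t\<in>D. encode_pairs N (I t) (A t))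
            ((\<lambda>X. (\<lambda>t\<in>D. map (\<lambda>x. x div N) (X t), \<lambda>t\<in>D. map (\<lambda>x. x mod N) (X t))) X) = X"
    by (auto simp: PiE_iff extensional_def fun_eq_iff)
  show "(\<lambda>(I, A). \<lambda>t\<in>D. encode_pairs N (I t) (A t)) ` ((D \<rightarrow>\<^sub>E idx M p) \<times> (D \<rightarrow>\<^sub>E idx N p))
          \<subseteq> D \<rightarrow>\<^sub>E idx (M*N) p"
    by (fastforce simp: idx_def PiE_iff set_conv_nth intro!: pair_code_less)
  show "(\<lambda>X. (\<lambda>t\<in>D. map (\<lambda>x. x div N) (X t), \<lambda>t\<in>D. map (\<lambda>x. x mod N) (X t))) ` (D \<rightarrow>\<^sub>E idx (M*N) p)
          \<subseteq> (D \<rightarrow>\<^sub>E idx M p) \<times> (D \<rightarrow>\<^sub>E idx N p)"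
    using assms by (auto simp: PiE_iff idx_def less_mult_imp_div_less subset_iff)
qed

lemma sum_PiE_idx_mult:
  fixes g :: "(nat \<Rightarrow> nat list) \<Rightarrow> complex"
  assumes "0 < N"
  shows "(\<Sum>X\<in>D \<rightarrow>\<^sub>E idx (M*N) p. g X) =
         (\<Sum>I\<in>D \<rightarrow>\<^sub>E idx M p. \<Sum>A\<in>D \<rightarrow>\<^sub>E idx N p. g (\<lambda>t\<in>D. encode_pairs N (I t) (A t)))"
  using sum.reindex_bij_betw[OF bij_betw_encode_pairs_PiE[OF assms], of g]
  by (simp add: sum.cartesian_product case_prod_unfold)

section \<open>Factorization of the deformed trace\<close>

definition deform_phase :: "(nat \<Rightarrow> nat \<Rightarrow> complex) \<Rightarrow> nat \<Rightarrow> nat \<Rightarrow> nat \<Rightarrow> nat \<Rightarrow> complex" where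
  "deform_phase Q i j c d = Q i c * Q j d / (Q i d * Q j c)"

definition twisted_tr :: "nat \<Rightarrow> (nat \<Rightarrow> nat \<Rightarrow> complex) \<Rightarrow> bmat \<Rightarrow> nat \<Rightarrow> nat list \<Rightarrow> nat list \<Rightarrow> nat list \<Rightarrow> nat list \<Rightarrow> complex" where
  "twisted_tr N Q V p is js as bs = (\<Sum>\<kappa>\<in>{..<p} \<rightarrow>\<^sub>E {..<N}. \<Prod>s<p. deform_phase Q (is!s) (js!s) (\<kappa> s) (\<kappa> (Suc s mod p)) *
      V (as!s) (bs!s) (\<kappa> s) (\<kappa> (Suc s mod p))) / of_nat N"

lemma deformed_tensor_pair_code:
  assumes "a < N" "b < N" "c < N" "d < N"
  shows "deformed_tensor M N Q U V (i * N + a) (j * N + b) (k * N + c) (l * N + d)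
       = U i j k l * (deform_phase Q i j c d * V a b c d)"
  using assms by (simp add: deformed_tensor_def Let_def deform_phase_def)

lemma Tp_deformed_tensor:
  assumes M: "0 < M" and N: "0 < N" and p: "0 < p"
    and I: "is \<in> idx M p" "js \<in> idx M p" and A: "as \<in> idx N p" "bs \<in> idx N p"
  shows "Tp (M*N) (deformed_tensor M N Q U V) p (encode_pairs N is as) (encode_pairs N js bs)
       = Tp M U p is js * twisted_tr N Q V p is js as bs"
proof -
  let ?W = "deformed_tensor M N Q U V"
  let ?c = "\<lambda>s. Suc s mod p"
  let ?fU = "\<lambda>\<kappa>. \<Prod>s<p. U (is!s) (js!s) (\<kappa> s) (\<kappa> (?c s))"
  let ?fV = "\<lambda>\<kappa>. \<Prod>s<p. deform_phase Q (is!s) (js!s) (\<kappa> s) (\<kappa> (?c s)) * V (as!s) (bs!s) (\<kappa> s) (\<kappa> (?c s))"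
  have len: "length is = p" "length js = p" "length as = p" "length bs = p"
    using I A by (auto simp: idx_def)
  have factor: "(\<Prod>s<p. ?W (encode_pairs N is as ! s) (encode_pairs N js bs ! s)
                   ((\<lambda>s\<in>{..<p}. \<kappa>1 s * N + \<kappa>2 s) s) ((\<lambda>s\<in>{..<p}. \<kappa>1 s * N + \<kappa>2 s) (?c s)))
             = ?fU \<kappa>1 * ?fV \<kappa>2" if \<kappa>2: "\<kappa>2 \<in> {..<p} \<rightarrow>\<^sub>E {..<N}" for \<kappa>1 \<kappa>2
  proof -
    have "?W (encode_pairs N is as ! s) (encode_pairs N js bs ! s)
            ((\<lambda>s\<in>{..<p}. \<kappa>1 s * N + \<kappa>2 s) s) ((\<lambda>s\<in>{..<p}. \<kappa>1 s * N + \<kappa>2 s) (?c s))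
        = U (is!s) (js!s) (\<kappa>1 s) (\<kappa>1 (?c s)) *
          (deform_phase Q (is!s) (js!s) (\<kappa>2 s) (\<kappa>2 (?c s)) * V (as!s) (bs!s) (\<kappa>2 s) (\<kappa>2 (?c s)))"
      if s: "s < p" for s
    proof -
      have c: "?c s < p" using p by simp
      then have "as ! s < N" "bs ! s < N" "\<kappa>2 s < N" "\<kappa>2 (?c s) < N"
        using s \<kappa>2 nth_idx_less[OF A(1)] nth_idx_less[OF A(2)] by (auto simp: PiE_iff)
      with s c len show ?thesis by (simp add: deformed_tensor_pair_code)
    qed
    then show ?thesis by (simp add: prod.distrib)
  qed
  have "Tp (M*N) ?W p (encode_pairs N is as) (encode_pairs N js bs)
      = (\<Sum>\<kappa>\<in>{..<p} \<rightarrow>\<^sub>E {..<M*N}. \<Prod>s<p. ?W (encode_pairs N is as ! s) (encode_pairs N js bs ! s)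
            (\<kappa> s) (\<kappa> (?c s))) / of_nat (M*N)"
    using len p by (intro Tp_eq_cycle_sum) auto
  also have "\<dots> = (\<Sum>\<kappa>1\<in>{..<p} \<rightarrow>\<^sub>E {..<M}. \<Sum>\<kappa>2\<in>{..<p} \<rightarrow>\<^sub>E {..<N}.
       \<Prod>s<p. ?W (encode_pairs N is as ! s) (encode_pairs N js bs ! s)
         ((\<lambda>s\<in>{..<p}. \<kappa>1 s * N + \<kappa>2 s) s) ((\<lambda>s\<in>{..<p}. \<kappa>1 s * N + \<kappa>2 s) (?c s))) / of_nat (M*N)"
    by (simp only: sum_PiE_lessThan_mult[OF N])
  also have "\<dots> = (\<Sum>\<kappa>1\<in>{..<p} \<rightarrow>\<^sub>E {..<M}. \<Sum>\<kappa>2\<in>{..<p} \<rightarrow>\<^sub>E {..<N}. ?fU \<kappa>1 * ?fV \<kappa>2) / of_nat (M*N)"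
    by (intro arg_cong[where f="\<lambda>x. x / _"] sum.cong refl factor)
  also have "\<dots> = ((\<Sum>\<kappa>\<in>{..<p} \<rightarrow>\<^sub>E {..<M}. ?fU \<kappa>) / of_nat M) * ((\<Sum>\<kappa>\<in>{..<p} \<rightarrow>\<^sub>E {..<N}. ?fV \<kappa>) / of_nat N)"
    by (simp add: sum_product)
  also have "\<dots> = Tp M U p is js * twisted_tr N Q V p is js as bs"
    by (subst Tp_eq_cycle_sum[OF len(1,2) p]) (simp add: twisted_tr_def)
  finally show ?thesis .
qed

text \<open>For fixed s the inner sum is N times the trace of a word of length r in the entries of V',
  so positivity of V' makes every factor nonnegative.\<close>

definition prime_trace_weight :: "nat \<Rightarrow> bmat \<Rightarrow> nat \<Rightarrow> nat \<Rightarrow> (nat \<Rightarrow> nat \<Rightarrow> nat) \<Rightarrow> complex" where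
  "prime_trace_weight N V p r K = (\<Prod>s<p. \<Sum>\<alpha>\<in>{..<r} \<rightarrow>\<^sub>E {..<N}. \<Prod>t<r. V (\<alpha> t) (\<alpha> (Suc t mod r)) (K t s) (K t (Suc s mod p)))"

lemma sum_phased_cycles:
  fixes ph :: "nat \<Rightarrow> nat \<Rightarrow> nat \<Rightarrow> nat \<Rightarrow> complex"
  assumes r: "0 < r"
  shows "(\<Sum>A\<in>{..<r} \<rightarrow>\<^sub>E idx N p. \<Prod>t<r. (\<Sum>\<kappa>\<in>{..<p} \<rightarrow>\<^sub>E {..<N}. \<Prod>s<p. ph t s (\<kappa> s) (\<kappa> (Suc s mod p)) *
            V (A t ! s) (A (Suc t mod r) ! s) (\<kappa> s) (\<kappa> (Suc s mod p))) / of_nat N)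
       = (\<Sum>K\<in>{..<r} \<rightarrow>\<^sub>E ({..<p} \<rightarrow>\<^sub>E {..<N}). (\<Prod>t<r. \<Prod>s<p. ph t s (K t s) (K t (Suc s mod p))) * prime_trace_weight N V p r K) / of_nat N ^ r"
proof -
  let ?h = "\<lambda>A t \<kappa>. \<Prod>s<p. ph t s (\<kappa> s) (\<kappa> (Suc s mod p)) * V (A t ! s) (A (Suc t mod r) ! s) (\<kappa> s) (\<kappa> (Suc s mod p))"
  let ?Phi = "\<lambda>K. \<Prod>t<r. \<Prod>s<p. ph t s (K t s) (K t (Suc s mod p))"
  have "(\<Sum>A\<in>{..<r} \<rightarrow>\<^sub>E idx N p. \<Prod>t<r. (\<Sum>\<kappa>\<in>{..<p} \<rightarrow>\<^sub>E {..<N}. ?h A t \<kappa>) / of_nat N)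
      = (\<Sum>A\<in>{..<r} \<rightarrow>\<^sub>E idx N p. (\<Prod>t<r. \<Sum>\<kappa>\<in>{..<p} \<rightarrow>\<^sub>E {..<N}. ?h A t \<kappa>)) / of_nat N ^ r"
    by (simp add: prod_dividef sum_divide_distrib[symmetric])
  also have "\<dots> = (\<Sum>A\<in>{..<r} \<rightarrow>\<^sub>E idx N p. \<Sum>K\<in>{..<r} \<rightarrow>\<^sub>E ({..<p} \<rightarrow>\<^sub>E {..<N}). \<Prod>t<r. ?h A t (K t)) / of_nat N ^ r"
    by (subst prod_sum_PiE) (auto intro: finite_PiE)
  also have "\<dots> = (\<Sum>K\<in>{..<r} \<rightarrow>\<^sub>E ({..<p} \<rightarrow>\<^sub>E {..<N}). \<Sum>A\<in>{..<r} \<rightarrow>\<^sub>E idx N p. \<Prod>t<r. ?h A t (K t)) / of_nat N ^ r"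
    by (subst sum.swap) (rule refl)
  also have "\<dots> = (\<Sum>K\<in>{..<r} \<rightarrow>\<^sub>E ({..<p} \<rightarrow>\<^sub>E {..<N}). ?Phi K * prime_trace_weight N V p r K) / of_nat N ^ r"
  proof (intro arg_cong[where f="\<lambda>x. x / _"] sum.cong refl)
    fix K
    have "(\<Sum>A\<in>{..<r} \<rightarrow>\<^sub>E idx N p. \<Prod>t<r. ?h A t (K t))
        = (\<Sum>A\<in>{..<r} \<rightarrow>\<^sub>E idx N p. ?Phi K * (\<Prod>t<r. \<Prod>s<p. V (A t ! s) (A (Suc t mod r) ! s) (K t s) (K t (Suc s mod p))))"
      by (simp add: prod.distrib)
    also have "\<dots> = ?Phi K * (\<Sum>A\<in>{..<r} \<rightarrow>\<^sub>E idx N p. \<Prod>t<r. \<Prod>s<p. V (A t ! s) (A (Suc t mod r) ! s) (K t s) (K t (Suc s mod p)))"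
      by (simp add: sum_distrib_left)
    also have "\<dots> = ?Phi K * prime_trace_weight N V p r K"
      unfolding prime_trace_weight_def
      using sum_PiE_idx_transpose[OF r, of "\<lambda>t s a b. V a b (K t s) (K t (Suc s mod p))" p N] by simp
    finally show "(\<Sum>A\<in>{..<r} \<rightarrow>\<^sub>E idx N p. \<Prod>t<r. ?h A t (K t)) = ?Phi K * prime_trace_weight N V p r K" .
  qed
  finally show ?thesis .
qed

definition deformed_weight ::
    "nat \<Rightarrow> (nat \<Rightarrow> nat \<Rightarrow> complex) \<Rightarrow> bmat \<Rightarrow> nat \<Rightarrow> nat \<Rightarrow> (nat \<Rightarrow> nat list) \<Rightarrow> complex" where
  "deformed_weight N Q V p r I =
     (\<Sum>K\<in>{..<r} \<rightarrow>\<^sub>E ({..<p} \<rightarrow>\<^sub>E {..<N}).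
        (\<Prod>t<r. \<Prod>s<p. deform_phase Q (I t ! s) (I (Suc t mod r) ! s) (K t s) (K t (Suc s mod p)))
        * prime_trace_weight N V p r K) / of_nat N ^ r"

lemma cpr_deformed_tensor_eq:
  assumes M: "0 < M" and N: "0 < N" and p: "0 < p" and r: "0 < r"
  shows "cpr (M*N) (deformed_tensor M N Q U V) p r =
    (\<Sum>I\<in>{..<r} \<rightarrow>\<^sub>E idx M p. (\<Prod>t<r. Tp M U p (I t) (I (Suc t mod r))) * deformed_weight N Q V p r I)"
proof -
  let ?W = "deformed_tensor M N Q U V"
  let ?R = "{..<r}"
  let ?TU = "\<lambda>I. \<Prod>t<r. Tp M U p (I t) (I (Suc t mod r))"
  let ?TV = "\<lambda>I A. \<Prod>t<r. twisted_tr N Q V p (I t) (I (Suc t mod r)) (A t) (A (Suc t mod r))"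
  have factor: "(\<Prod>t<r. Tp (M*N) ?W p ((\<lambda>t\<in>?R. encode_pairs N (I t) (A t)) t)
                  ((\<lambda>t\<in>?R. encode_pairs N (I t) (A t)) (Suc t mod r)))
              = ?TU I * ?TV I A"
    if I: "I \<in> ?R \<rightarrow>\<^sub>E idx M p" and A: "A \<in> ?R \<rightarrow>\<^sub>E idx N p" for I A
  proof -
    have "Tp (M*N) ?W p ((\<lambda>t\<in>?R. encode_pairs N (I t) (A t)) t)
            ((\<lambda>t\<in>?R. encode_pairs N (I t) (A t)) (Suc t mod r))
        = Tp M U p (I t) (I (Suc t mod r)) * twisted_tr N Q V p (I t) (I (Suc t mod r)) (A t) (A (Suc t mod r))"
      if t: "t < r" for t
    proof -
      have c: "Suc t mod r < r" using r by simp
      then have "I t \<in> idx M p" "I (Suc t mod r) \<in> idx M p" "A t \<in> idx N p" "A (Suc t mod r) \<in> idx N p"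
        using t I A by (auto simp: PiE_iff)
      with t c show ?thesis by (simp add: Tp_deformed_tensor[OF M N p])
    qed
    then show ?thesis by (simp add: prod.distrib)
  qed
  have "cpr (M*N) ?W p r = (\<Sum>X\<in>?R \<rightarrow>\<^sub>E idx (M*N) p. \<Prod>t<r. Tp (M*N) ?W p (X t) (X (Suc t mod r)))"
    by (rule cpr_eq_cycle_sum[OF r])
  also have "\<dots> = (\<Sum>I\<in>?R \<rightarrow>\<^sub>E idx M p. \<Sum>A\<in>?R \<rightarrow>\<^sub>E idx N p. ?TU I * ?TV I A)"
    by (simp only: sum_PiE_idx_mult[OF N]) (intro sum.cong refl factor)
  also have "\<dots> = (\<Sum>I\<in>?R \<rightarrow>\<^sub>E idx M p. ?TU I * deformed_weight N Q V p r I)"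
  proof (intro sum.cong refl)
    fix I
    have "(\<Sum>A\<in>?R \<rightarrow>\<^sub>E idx N p. ?TV I A) = deformed_weight N Q V p r I"
      unfolding twisted_tr_def deformed_weight_def
      by (rule sum_phased_cycles[OF r, where ph="\<lambda>t s. deform_phase Q (I t ! s) (I (Suc t mod r) ! s)"])
    then show "(\<Sum>A\<in>?R \<rightarrow>\<^sub>E idx N p. ?TU I * ?TV I A) = ?TU I * deformed_weight N Q V p r I"
      by (simp only: sum_distrib_left[symmetric])
  qed
  finally show ?thesis .
qed

lemma cpr_eq_prime_trace_weight_sum:
  assumes N: "0 < N" and p: "0 < p" and r: "0 < r"
  shows "cpr N V p r = (\<Sum>K\<in>{..<r} \<rightarrow>\<^sub>E ({..<p} \<rightarrow>\<^sub>E {..<N}). prime_trace_weight N V p r K) / of_nat N ^ r"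
proof -
  let ?one = "\<lambda>_ _ _ _. 1 :: complex"
  have cr: "Suc t mod r < r" for t using r by simp
  have "cpr N V p r = (\<Sum>A\<in>{..<r} \<rightarrow>\<^sub>E idx N p. \<Prod>t<r. Tp N V p (A t) (A (Suc t mod r)))"
    by (rule cpr_eq_cycle_sum[OF r])
  also have "\<dots> = (\<Sum>A\<in>{..<r} \<rightarrow>\<^sub>E idx N p. \<Prod>t<r. (\<Sum>\<kappa>\<in>{..<p} \<rightarrow>\<^sub>E {..<N}. \<Prod>s<p. ?one t s (\<kappa> s) (\<kappa> (Suc s mod p)) *
            V (A t ! s) (A (Suc t mod r) ! s) (\<kappa> s) (\<kappa> (Suc s mod p))) / of_nat N)"
  proof (intro sum.cong refl prod.cong)
    fix A t assume A: "A \<in> {..<r} \<rightarrow>\<^sub>E idx N p" and t: "t \<in> {..<r}"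
    then have "length (A t) = p" "length (A (Suc t mod r)) = p" using cr[of t] by (auto simp: idx_def)
    then show "Tp N V p (A t) (A (Suc t mod r)) = (\<Sum>\<kappa>\<in>{..<p} \<rightarrow>\<^sub>E {..<N}. \<Prod>s<p. ?one t s (\<kappa> s) (\<kappa> (Suc s mod p)) *
            V (A t ! s) (A (Suc t mod r) ! s) (\<kappa> s) (\<kappa> (Suc s mod p))) / of_nat N"
      using p by (simp add: Tp_eq_cycle_sum)
  qed
  also have "\<dots> = (\<Sum>K\<in>{..<r} \<rightarrow>\<^sub>E ({..<p} \<rightarrow>\<^sub>E {..<N}). (\<Prod>t<r. \<Prod>s<p. ?one t s (K t s) (K t (Suc s mod p))) * prime_trace_weight N V p r K) / of_nat N ^ r"
    using sum_phased_cycles[OF r, where ph="?one" and N=N and p=p and V=V] by simp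
  finally show ?thesis by simp
qed

section \<open>Positivity and the estimate\<close>

lemma prod_nonneg_complex: "(\<And>x. x \<in> A \<Longrightarrow> 0 \<le> f x) \<Longrightarrow> 0 \<le> (\<Prod>x\<in>A. f x :: complex)"
  by (induction A rule: infinite_finite_induct) (auto intro: mult_nonneg_nonneg simp: less_eq_complex_def)

lemma norm_eq_Re_if_nonneg: "0 \<le> (z::complex) \<Longrightarrow> norm z = Re z"
  by (simp add: less_eq_complex_def cmod_eq_Re)

lemma nonneg_complexI: "z \<in> \<real> \<Longrightarrow> 0 \<le> Re z \<Longrightarrow> 0 \<le> (z::complex)"
  by (simp add: less_eq_complex_def complex_is_Real_iff)

lemma norm_deform_phase:
  assumes "norm (Q i c) = 1" "norm (Q j d) = 1" "norm (Q i d) = 1" "norm (Q j c) = 1"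
  shows "norm (deform_phase Q i j c d) = 1"
  using assms by (simp add: deform_phase_def norm_mult norm_divide)

lemma Tp_nonneg_if_positive:
  assumes "positive_model n U" "is \<in> idx n p" "js \<in> idx n p"
  shows "0 \<le> Tp n U p is js"
  using assms unfolding positive_model_def Tp_def by (intro nonneg_complexI) auto

lemma cycle_Tp_nonneg_if_positive:
  assumes U: "positive_model n U" and I: "I \<in> {..<r} \<rightarrow>\<^sub>E idx n p"
  shows "0 \<le> (\<Prod>t<r. Tp n U p (I t) (I (Suc t mod r)))"
proof (rule prod_nonneg_complex)
  fix t assume "t \<in> {..<r}"
  then have "Suc t mod r < r" by simp
  then show "0 \<le> Tp n U p (I t) (I (Suc t mod r))"
    using I \<open>t \<in> {..<r}\<close> by (intro Tp_nonneg_if_positive[OF U]) (auto simp del: lessThan_iff)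
qed

lemma cpr_nonneg_if_positive:
  assumes "positive_model n U" "0 < r"
  shows "0 \<le> cpr n U p r"
  unfolding cpr_eq_cycle_sum[OF assms(2)]
  by (intro sum_nonneg cycle_Tp_nonneg_if_positive[OF assms(1)])

lemma prime_trace_weight_nonneg:
  assumes V: "positive_model N (prime_model V)" and N: "0 < N" and r: "0 < r"
    and K: "K \<in> {..<r} \<rightarrow>\<^sub>E ({..<p} \<rightarrow>\<^sub>E {..<N})"
  shows "0 \<le> prime_trace_weight N V p r K"
  unfolding prime_trace_weight_def
proof (rule prod_nonneg_complex)
  fix s assume s: "s \<in> {..<p}"
  let ?is = "map (\<lambda>t. K t s) [0..<r]" and ?js = "map (\<lambda>t. K t (Suc s mod p)) [0..<r]"
  let ?S = "\<Sum>\<alpha>\<in>{..<r} \<rightarrow>\<^sub>E {..<N}. \<Prod>t<r. V (\<alpha> t) (\<alpha> (Suc t mod r)) (K t s) (K t (Suc s mod p))"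
  have "?is \<in> idx N r" "?js \<in> idx N r"
    using K s by (auto simp: idx_def PiE_iff)
  then have "0 \<le> Tp N (prime_model V) r ?is ?js"
    by (rule Tp_nonneg_if_positive[OF V])
  moreover have "Tp N (prime_model V) r ?is ?js = ?S / of_nat N"
    using r by (subst Tp_eq_cycle_sum)
      (auto simp: prime_model_def intro!: sum.cong prod.cong arg_cong[where f="\<lambda>x. x / _"])
  ultimately have "0 \<le> of_nat N * (?S / of_nat N)"
    by (intro mult_nonneg_nonneg) (auto simp: less_eq_complex_def)
  then show "0 \<le> ?S" using N by simp
qed

lemma cpr_nonneg_if_prime_positive:
  assumes "positive_model N (prime_model V)" "0 < N" "0 < p" "0 < r"
  shows "0 \<le> cpr N V p r"
proof -
  have "0 \<le> (\<Sum>K\<in>{..<r} \<rightarrow>\<^sub>E ({..<p} \<rightarrow>\<^sub>E {..<N}). prime_trace_weight N V p r K)"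
    using assms by (intro sum_nonneg prime_trace_weight_nonneg)
  then show ?thesis
    using assms by (simp add: cpr_eq_prime_trace_weight_sum less_eq_complex_def)
qed

lemma norm_sum_unimodular_mult_le:
  fixes u f :: "'a \<Rightarrow> complex"
  assumes "\<And>x. x \<in> S \<Longrightarrow> norm (u x) = 1" "\<And>x. x \<in> S \<Longrightarrow> 0 \<le> f x"
  shows "norm (\<Sum>x\<in>S. u x * f x) \<le> norm (\<Sum>x\<in>S. f x)"
proof -
  have "norm (\<Sum>x\<in>S. u x * f x) \<le> (\<Sum>x\<in>S. norm (u x * f x))"
    by (rule norm_sum)
  also have "\<dots> = (\<Sum>x\<in>S. Re (f x))"
    using assms by (intro sum.cong refl) (simp add: norm_mult norm_eq_Re_if_nonneg)
  also have "\<dots> = norm (\<Sum>x\<in>S. f x)"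
    using assms(2) by (simp add: norm_eq_Re_if_nonneg sum_nonneg)
  finally show ?thesis .
qed

lemma norm_sum_nonneg_mult_le:
  fixes a g :: "'a \<Rightarrow> complex"
  assumes "\<And>x. x \<in> S \<Longrightarrow> 0 \<le> a x" "\<And>x. x \<in> S \<Longrightarrow> norm (g x) \<le> c"
  shows "norm (\<Sum>x\<in>S. a x * g x) \<le> Re (\<Sum>x\<in>S. a x) * c"
proof -
  have "norm (\<Sum>x\<in>S. a x * g x) \<le> (\<Sum>x\<in>S. Re (a x) * norm (g x))"
    using norm_sum[of "\<lambda>x. a x * g x" S] assms(1) by (simp add: norm_mult norm_eq_Re_if_nonneg)
  also have "\<dots> \<le> (\<Sum>x\<in>S. Re (a x) * c)"
    using assms by (intro sum_mono mult_left_mono) (auto simp: less_eq_complex_def)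
  finally show ?thesis by (simp add: sum_distrib_right)
qed

lemma norm_deformed_weight_le:
  assumes V: "positive_model N (prime_model V)" and Q: "\<forall>i<M. \<forall>c<N. norm (Q i c) = 1"
    and N: "0 < N" and p: "0 < p" and r: "0 < r" and I: "I \<in> {..<r} \<rightarrow>\<^sub>E idx M p"
  shows "norm (deformed_weight N Q V p r I) \<le> norm (cpr N V p r)"
proof -
  let ?KS = "{..<r} \<rightarrow>\<^sub>E ({..<p} \<rightarrow>\<^sub>E {..<N})"
  have "norm (\<Prod>t<r. \<Prod>s<p. deform_phase Q (I t ! s) (I (Suc t mod r) ! s) (K t s) (K t (Suc s mod p))) = 1"
    if K: "K \<in> ?KS" for K
  proof -
    have "norm (deform_phase Q (I t ! s) (I (Suc t mod r) ! s) (K t s) (K t (Suc s mod p))) = 1"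
      if "t < r" "s < p" for t s
    proof -
      have "I t \<in> idx M p" "I (Suc t mod r) \<in> idx M p" "Suc s mod p < p"
        using I that by (auto simp: PiE_iff)
      then have "I t ! s < M" "I (Suc t mod r) ! s < M" "K t s < N" "K t (Suc s mod p) < N"
        using K that by (auto simp: PiE_iff nth_idx_less)
      then show ?thesis using Q by (intro norm_deform_phase) auto
    qed
    then show ?thesis by (simp add: prod_norm[symmetric])
  qed
  then have "norm (\<Sum>K\<in>?KS. (\<Prod>t<r. \<Prod>s<p. deform_phase Q (I t ! s) (I (Suc t mod r) ! s) (K t s) (K t (Suc s mod p)))
              * prime_trace_weight N V p r K)
      \<le> norm (\<Sum>K\<in>?KS. prime_trace_weight N V p r K)"
    using prime_trace_weight_nonneg[OF V N r] by (intro norm_sum_unimodular_mult_le)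
  then show ?thesis
    unfolding deformed_weight_def cpr_eq_prime_trace_weight_sum[OF N p r]
    by (simp add: norm_divide divide_right_mono)
qed

theorem theorem2p9:
  fixes M N :: nat and U V :: bmat and Q :: "nat \<Rightarrow> nat \<Rightarrow> complex" and p r :: nat
  assumes "M \<ge> 1" and "N \<ge> 1"
    and "projective_model M U" and "projective_model N V"
    and "positive_model M U" and "positive_model N (prime_model V)"
    and "\<forall>i<M. \<forall>c<N. norm (Q i c) = 1"
    and "p \<ge> 1" and "r \<ge> 1"
  shows "cpr M U p r * cpr N V p r \<in> \<real> \<and>
         norm (cpr (M * N) (deformed_tensor M N Q U V) p r)
           \<le> Re (cpr M U p r * cpr N V p r)"
proof -
  have M: "0 < M" and N: "0 < N" and p: "0 < p" and r: "0 < r" using assms by auto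
  have U_nonneg: "0 \<le> cpr M U p r"
    using assms(5) r by (rule cpr_nonneg_if_positive)
  have V_nonneg: "0 \<le> cpr N V p r"
    using assms(6) N p r by (rule cpr_nonneg_if_prime_positive)
  have "norm (cpr (M * N) (deformed_tensor M N Q U V) p r) \<le> Re (cpr M U p r) * norm (cpr N V p r)"
    unfolding cpr_deformed_tensor_eq[OF M N p r] cpr_eq_cycle_sum[OF r, of M U]
    using assms(5,6,7) N p r
    by (intro norm_sum_nonneg_mult_le cycle_Tp_nonneg_if_positive norm_deformed_weight_le)
  also have "\<dots> = Re (cpr M U p r * cpr N V p r)"
    using V_nonneg norm_eq_Re_if_nonneg[OF V_nonneg] by (simp add: less_eq_complex_def)
  finally show ?thesis
    using U_nonneg V_nonneg by (simp add: nonnegative_complex_is_real mult_nonneg_nonneg)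
qed

end
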